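(* A finite graph is isomorphic to an induced subgraph of the power graph of some finite group if and only if it is the comparability graph of a partial order. Moreover, the group can be taken to be cyclic of squarefree order.
   Context: The power graph of a group $G$ has vertex set $G$, distinct $x,y$ adjacent iff one is a power of the other. The comparability graph of a partial order $(A,\leqslant)$ has vertex set $A$, with distinct $a,b$ adjacent iff $a\leqslant b$ or $b\leqslant a$. *)

theory Defs
  imports "HOL-Algebra.Algebra" "HOL-Computational_Algebra.Squarefree"
begin

definition finite_simple_graph :: "'a set \<Rightarrow> ('a \<Rightarrow> 'a \<Rightarrow> bool) \<Rightarrow> bool" where
  "finite_simple_graph V E \<longleftrightarrow> finite V \<and>
     (\<forall>x\<in>V. \<forall>y\<in>V. E x y \<longleftrightarrow> E y x) \<and> (\<forall>x\<in>V. \<not> E x x)"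

definition power_graph_adj :: "('g, 'b) monoid_scheme \<Rightarrow> 'g \<Rightarrow> 'g \<Rightarrow> bool" where
  "power_graph_adj G x y \<longleftrightarrow> x \<noteq> y \<and>
     ((\<exists>n::int. x = y [^]\<^bsub>G\<^esub> n) \<or> (\<exists>n::int. y = x [^]\<^bsub>G\<^esub> n))"

definition embeds_in_power_graph ::
    "'a set \<Rightarrow> ('a \<Rightarrow> 'a \<Rightarrow> bool) \<Rightarrow> ('g, 'b) monoid_scheme \<Rightarrow> bool" where
  "embeds_in_power_graph V E G \<longleftrightarrow>
     (\<exists>f. inj_on f V \<and> f ` V \<subseteq> carrier G \<and>
          (\<forall>x\<in>V. \<forall>y\<in>V. E x y \<longleftrightarrow> power_graph_adj G (f x) (f y)))"

definition partial_order_on_set :: "'a set \<Rightarrow> ('a \<Rightarrow> 'a \<Rightarrow> bool) \<Rightarrow> bool" where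
  "partial_order_on_set A R \<longleftrightarrow>
     (\<forall>x\<in>A. R x x) \<and>
     (\<forall>x\<in>A. \<forall>y\<in>A. R x y \<and> R y x \<longrightarrow> x = y) \<and>
     (\<forall>x\<in>A. \<forall>y\<in>A. \<forall>z\<in>A. R x y \<and> R y z \<longrightarrow> R x z)"

definition comparability_adj :: "('a \<Rightarrow> 'a \<Rightarrow> bool) \<Rightarrow> 'a \<Rightarrow> 'a \<Rightarrow> bool" where
  "comparability_adj R x y \<longleftrightarrow> x \<noteq> y \<and> (R x y \<or> R y x)"

definition is_comparability_graph :: "'a set \<Rightarrow> ('a \<Rightarrow> 'a \<Rightarrow> bool) \<Rightarrow> bool" where
  "is_comparability_graph V E \<longleftrightarrow>
     (\<exists>R. partial_order_on_set V R \<and>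
          (\<forall>x\<in>V. \<forall>y\<in>V. E x y \<longleftrightarrow> comparability_adj R x y))"

end

theory Submission
  imports Defs
begin

text \<open>Being a power of is a preorder on every group, and the power graph is its comparability
graph. Breaking ties inside the equivalence classes of a preorder by an arbitrary linear order
gives a partial order with the same comparability graph, and induced subgraphs inherit this.
Conversely, give the points of a finite poset distinct primes \<open>p v\<close>, let \<open>N\<close> be their product
and send \<open>v\<close> to the product \<open>a v\<close> of the \<open>p u\<close> with \<open>u\<close> not below \<open>v\<close>. In the cyclic group of
order \<open>N\<close> the powers of a divisor of \<open>N\<close> are exactly its multiples, and \<open>a w\<close> divides \<open>a v\<close>
iff every \<open>u\<close> not below \<open>w\<close> is not below \<open>v\<close>, that is, iff \<open>v \<le> w\<close>.\<close>

lemma is_comparability_graph_cong: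
  assumes "\<And>x y. x \<in> V \<Longrightarrow> y \<in> V \<Longrightarrow> E x y \<longleftrightarrow> E' x y"
  shows "is_comparability_graph V E \<longleftrightarrow> is_comparability_graph V E'"
  using assms by (simp add: is_comparability_graph_def)

lemma comparability_graph_of_preorder:
  assumes refl: "\<And>x. x \<in> V \<Longrightarrow> Q x x"
    and trans: "\<And>x y z. \<lbrakk>x \<in> V; y \<in> V; z \<in> V; Q x y; Q y z\<rbrakk> \<Longrightarrow> Q x z"
  shows "is_comparability_graph V (\<lambda>x y. x \<noteq> y \<and> (Q x y \<or> Q y x))"
proof -
  obtain r where "linear_order_on V r"
    using well_order_on well_order_on_def by blast
  then have r_refl: "\<And>x. x \<in> V \<Longrightarrow> (x, x) \<in> r"
    and r_antisym: "\<And>x y. (x, y) \<in> r \<Longrightarrow> (y, x) \<in> r \<Longrightarrow> x = y"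
    and r_trans: "\<And>x y z. (x, y) \<in> r \<Longrightarrow> (y, z) \<in> r \<Longrightarrow> (x, z) \<in> r"
    and r_total: "\<And>x y. \<lbrakk>x \<in> V; y \<in> V; x \<noteq> y\<rbrakk> \<Longrightarrow> (x, y) \<in> r \<or> (y, x) \<in> r"
    unfolding order_on_defs refl_on_def antisym_def trans_def total_on_def by blast+
  define R where "R x y \<longleftrightarrow> Q x y \<and> (Q y x \<longrightarrow> (x, y) \<in> r)" for x y
  have "partial_order_on_set V R"
    unfolding partial_order_on_set_def R_def
    using refl r_refl r_antisym by (blast intro: trans r_trans)
  moreover have "x \<noteq> y \<and> (Q x y \<or> Q y x) \<longleftrightarrow> comparability_adj R x y"
    if "x \<in> V" "y \<in> V" for x y
    using r_total[OF that] by (auto simp: comparability_adj_def R_def)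
  ultimately show ?thesis
    unfolding is_comparability_graph_def by blast
qed

lemma comparability_graph_if_embeds_in_power_graph:
  fixes G :: "('g, 'b) monoid_scheme" (structure)
  assumes "group G" and "embeds_in_power_graph V E G"
  shows "is_comparability_graph V E"
proof -
  interpret group G by fact
  obtain f where f_inj: "inj_on f V" and f_carrier: "f ` V \<subseteq> carrier G"
    and f_adj: "\<And>x y. x \<in> V \<Longrightarrow> y \<in> V \<Longrightarrow> E x y \<longleftrightarrow> power_graph_adj G (f x) (f y)"
    using assms(2) unfolding embeds_in_power_graph_def by blast
  define Q where "Q x y \<longleftrightarrow> (\<exists>n::int. f x = f y [^] n)" for x y
  have "Q x x" if "x \<in> V" for x
    unfolding Q_def using that f_carrier by (intro exI[of _ 1]) auto
  moreover have "Q x z" if "z \<in> V" and xy: "Q x y" and yz: "Q y z" for x y z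
  proof -
    obtain m l :: int where "f x = f y [^] m" "f y = f z [^] l"
      using xy yz unfolding Q_def by blast
    moreover have "f z \<in> carrier G"
      using \<open>z \<in> V\<close> f_carrier by auto
    ultimately have "f x = f z [^] (l * m)"
      by (simp add: int_pow_pow)
    then show ?thesis
      unfolding Q_def by blast
  qed
  ultimately have "is_comparability_graph V (\<lambda>x y. x \<noteq> y \<and> (Q x y \<or> Q y x))"
    by (rule comparability_graph_of_preorder)
  moreover have "E x y \<longleftrightarrow> x \<noteq> y \<and> (Q x y \<or> Q y x)" if "x \<in> V" "y \<in> V" for x y
    using f_adj[OF that] inj_on_eq_iff[OF f_inj that]
    by (simp add: power_graph_adj_def Q_def)
  then have "is_comparability_graph V E
      \<longleftrightarrow> is_comparability_graph V (\<lambda>x y. x \<noteq> y \<and> (Q x y \<or> Q y x))"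
    by (rule is_comparability_graph_cong)
  ultimately show ?thesis
    by simp
qed

lemma prod_primes_dvd_iff_subset:
  fixes p :: "'a \<Rightarrow> 'b :: factorial_semiring"
  assumes "finite S" "finite T" "inj_on p (S \<union> T)"
    and prime: "\<And>x. x \<in> S \<union> T \<Longrightarrow> Factorial_Ring.prime (p x)"
  shows "prod p S dvd prod p T \<longleftrightarrow> S \<subseteq> T"
proof
  assume dvd: "prod p S dvd prod p T"
  show "S \<subseteq> T"
  proof
    fix x assume x: "x \<in> S"
    have "p x dvd prod p T"
      using dvd_prodI[OF assms(1) x] dvd by (rule dvd_trans)
    then obtain y where y: "y \<in> T" "p x dvd p y"
      using prime_dvd_prod_iff[OF assms(2) prime] x by auto
    have "p x = p y"
      using x y by (intro primes_dvd_imp_eq prime) auto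
    then show "x \<in> T"
      using inj_onD[OF assms(3)] x y by auto
  qed
qed (use assms(2) in \<open>rule prod_dvd_prod_subset\<close>)

lemma finite_poset_divisor_representation:
  assumes "finite V" and "partial_order_on_set V R"
  obtains N :: nat and a :: "'a \<Rightarrow> nat" where "squarefree N"
    and "\<And>v. v \<in> V \<Longrightarrow> a v dvd N \<and> a v < N"
    and "\<And>v w. v \<in> V \<Longrightarrow> w \<in> V \<Longrightarrow> a w dvd a v \<longleftrightarrow> R v w"
proof -
  have refl: "\<And>v. v \<in> V \<Longrightarrow> R v v"
    and trans: "\<And>u v w. \<lbrakk>u \<in> V; v \<in> V; w \<in> V; R u v; R v w\<rbrakk> \<Longrightarrow> R u w"
    using assms(2) unfolding partial_order_on_set_def by blast+
  obtain P :: "nat set" where P: "finite P" "card P = card V"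
    and P_primes: "P \<subseteq> {p. Factorial_Ring.prime p}"
    using infinite_arbitrarily_large[OF primes_infinite] by blast
  obtain p where p_P: "p ` V \<subseteq> P" and p_inj: "inj_on p V"
    using card_le_inj[OF assms(1) P(1)] P(2) by auto
  have p_prime: "\<And>v. v \<in> V \<Longrightarrow> Factorial_Ring.prime (p v)"
    using p_P P_primes by blast
  define N where "N = prod p V"
  define a where "a v = prod p {u \<in> V. \<not> R u v}" for v
  have dvd_iff: "prod p S dvd prod p T \<longleftrightarrow> S \<subseteq> T" if "S \<subseteq> V" "T \<subseteq> V" for S T
    using that finite_subset[OF _ assms(1)] inj_on_subset[OF p_inj] p_prime
    by (intro prod_primes_dvd_iff_subset) auto
  have "squarefree N"
    unfolding N_def
  proof (rule squarefree_prod_coprime)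
    fix u v assume "u \<in> V" "v \<in> V" "u \<noteq> v"
    then show "coprime (p u) (p v)"
      using p_prime inj_on_eq_iff[OF p_inj] by (intro primes_coprime) auto
  qed (use p_prime squarefree_prime in auto)
  moreover have "a v dvd N \<and> a v < N" if "v \<in> V" for v
  proof -
    have "a v dvd N"
      unfolding a_def N_def using dvd_iff[of _ V] by auto
    moreover have "\<not> N dvd a v"
      unfolding a_def N_def using dvd_iff[of V] refl that by auto
    moreover have "N > 0"
      using \<open>squarefree N\<close> by (auto intro: Nat.gr0I)
    ultimately show ?thesis
      using dvd_imp_le le_neq_implies_less by blast
  qed
  moreover have "a w dvd a v \<longleftrightarrow> R v w" if "v \<in> V" "w \<in> V" for v w
  proof -
    have "a w dvd a v \<longleftrightarrow> {u \<in> V. \<not> R u w} \<subseteq> {u \<in> V. \<not> R u v}"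
      unfolding a_def by (rule dvd_iff) auto
    also have "\<dots> \<longleftrightarrow> R v w"
      using that refl trans by blast
    finally show ?thesis .
  qed
  ultimately show ?thesis
    using that by blast
qed

lemma (in group) ex_int_pow_iff_ex_nat_pow:
  assumes "finite (carrier G)" and "y \<in> carrier G"
  shows "(\<exists>n::int. x = y [^] n) \<longleftrightarrow> (\<exists>n::nat. x = y [^] n)"
  using generate_pow[OF assms(2)] generate_pow_on_finite_carrier[OF assms] by blast

text \<open>The library's \<open>integer_mod_group\<close> has carrier in \<open>int\<close>, but the theorem asks for a
\<open>nat monoid\<close>.\<close>

definition nat_mod_group :: "nat \<Rightarrow> nat monoid" where
  "nat_mod_group N = \<lparr>carrier = {..<N}, monoid.mult = (\<lambda>x y. (x + y) mod N), one = 0\<rparr>"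

lemma nat_mod_group_carrier [simp]: "carrier (nat_mod_group N) = {..<N}"
  and nat_mod_group_mult [simp]: "x \<otimes>\<^bsub>nat_mod_group N\<^esub> y = (x + y) mod N"
  and nat_mod_group_one [simp]: "\<one>\<^bsub>nat_mod_group N\<^esub> = 0"
  by (simp_all add: nat_mod_group_def)

lemma order_nat_mod_group: "order (nat_mod_group N) = N"
  by (simp add: order_def)

lemma group_nat_mod_group:
  assumes "N > 0"
  shows "group (nat_mod_group N)"
proof (rule groupI)
  fix x assume "x \<in> carrier (nat_mod_group N)"
  then show "\<exists>y\<in>carrier (nat_mod_group N). y \<otimes>\<^bsub>nat_mod_group N\<^esub> x = \<one>\<^bsub>nat_mod_group N\<^esub>"
    using assms by (intro bexI[of _ "(N - x) mod N"]) (auto simp: mod_add_left_eq)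
qed (use assms in \<open>auto simp: mod_add_left_eq mod_add_right_eq add.assoc\<close>)

lemma nat_pow_nat_mod_group: "x [^]\<^bsub>nat_mod_group N\<^esub> (n::nat) = (n * x) mod N"
  by (induction n) (simp_all add: mod_add_right_eq add.commute)

lemma cyclic_nat_mod_group:
  assumes "N > 0"
  shows "cyclic_group (nat_mod_group N)"
proof -
  interpret group "nat_mod_group N"
    using group_nat_mod_group[OF assms] .
  let ?g = "1 mod N"
  have g_carrier: "?g \<in> carrier (nat_mod_group N)"
    using assms by simp
  have "x = ?g [^]\<^bsub>nat_mod_group N\<^esub> int x" if "x < N" for x
    using that by (simp add: int_pow_int nat_pow_nat_mod_group mod_mult_right_eq)
  then have "carrier (nat_mod_group N) \<subseteq> range (\<lambda>n::int. ?g [^]\<^bsub>nat_mod_group N\<^esub> n)"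
    by (metis rangeI subsetI lessThan_iff nat_mod_group_carrier)
  moreover have "range (\<lambda>n::int. ?g [^]\<^bsub>nat_mod_group N\<^esub> n) \<subseteq> carrier (nat_mod_group N)"
    using int_pow_closed[OF g_carrier] by blast
  ultimately show ?thesis
    unfolding cyclic_group using g_carrier by blast
qed

lemma nat_mod_group_int_pow_divisor_iff:
  assumes "y dvd N" "y < N" "x < N"
  shows "(\<exists>n::int. x = y [^]\<^bsub>nat_mod_group N\<^esub> n) \<longleftrightarrow> y dvd x"
proof -
  interpret group "nat_mod_group N"
    using group_nat_mod_group assms(2) by simp
  have "(\<exists>n::int. x = y [^]\<^bsub>nat_mod_group N\<^esub> n) \<longleftrightarrow> (\<exists>n::nat. x = (n * y) mod N)"
    using ex_int_pow_iff_ex_nat_pow assms(2) by (simp add: nat_pow_nat_mod_group)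
  also have "\<dots> \<longleftrightarrow> y dvd x"
  proof
    assume "\<exists>n. x = (n * y) mod N"
    then show "y dvd x"
      using assms(1) by (auto simp: dvd_mod)
  next
    assume "y dvd x"
    then obtain c where "x = y * c" ..
    then show "\<exists>n. x = (n * y) mod N"
      using assms(3) by (auto simp: mult.commute intro!: exI[of _ c])
  qed
  finally show ?thesis .
qed

lemma comparability_graph_embeds_in_nat_mod_group:
  assumes "finite V" and "is_comparability_graph V E"
  obtains N where "squarefree N" and "embeds_in_power_graph V E (nat_mod_group N)"
proof -
  obtain R where R_po: "partial_order_on_set V R"
    and E_R: "\<forall>x\<in>V. \<forall>y\<in>V. E x y \<longleftrightarrow> comparability_adj R x y"
    using assms(2) unfolding is_comparability_graph_def by blast
  obtain N :: nat and a where "squarefree N" and a_dvd: "\<And>v. v \<in> V \<Longrightarrow> a v dvd N \<and> a v < N"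
    and a_R: "\<And>v w. v \<in> V \<Longrightarrow> w \<in> V \<Longrightarrow> a w dvd a v \<longleftrightarrow> R v w"
    using finite_poset_divisor_representation[OF assms(1) R_po] by metis
  have power_iff: "(\<exists>n::int. a v = a w [^]\<^bsub>nat_mod_group N\<^esub> n) \<longleftrightarrow> R v w"
    if "v \<in> V" "w \<in> V" for v w
  proof -
    have "(\<exists>n::int. a v = a w [^]\<^bsub>nat_mod_group N\<^esub> n) \<longleftrightarrow> a w dvd a v"
      using a_dvd that by (intro nat_mod_group_int_pow_divisor_iff) auto
    also have "\<dots> \<longleftrightarrow> R v w"
      by (rule a_R[OF that])
    finally show ?thesis .
  qed
  have a_inj: "v = w" if "v \<in> V" "w \<in> V" "a v = a w" for v w
  proof -
    have "R v w" "R w v"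
      using a_R[of v w] a_R[of w v] that by auto
    then show ?thesis
      using R_po that unfolding partial_order_on_set_def by blast
  qed
  have "embeds_in_power_graph V E (nat_mod_group N)"
    unfolding embeds_in_power_graph_def
  proof (intro exI[of _ a] conjI ballI)
    show "inj_on a V"
      using a_inj by (rule inj_onI)
    show "a ` V \<subseteq> carrier (nat_mod_group N)"
      using a_dvd by auto
    fix x y assume xy: "x \<in> V" "y \<in> V"
    then show "E x y \<longleftrightarrow> power_graph_adj (nat_mod_group N) (a x) (a y)"
      unfolding E_R[rule_format, OF xy] comparability_adj_def power_graph_adj_def
        power_iff[OF xy] power_iff[OF xy(2,1)]
      using a_inj by blast
  qed
  with \<open>squarefree N\<close> show ?thesis
    using that by blast
qed

theorem mainTheorem9:
  fixes V :: "'a set" and E :: "'a \<Rightarrow> 'a \<Rightarrow> bool"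
  assumes "finite_simple_graph V E"
  shows "(\<forall>G :: 'g monoid. group G \<and> finite (carrier G) \<and> embeds_in_power_graph V E G
            \<longrightarrow> is_comparability_graph V E)
       \<and> (is_comparability_graph V E \<longrightarrow>
          (\<exists>G :: nat monoid. group G \<and> finite (carrier G) \<and> cyclic_group G \<and>
              squarefree (order G) \<and> embeds_in_power_graph V E G))"
proof (intro conjI allI impI)
  fix G :: "'g monoid"
  assume "group G \<and> finite (carrier G) \<and> embeds_in_power_graph V E G"
  then show "is_comparability_graph V E"
    using comparability_graph_if_embeds_in_power_graph by blast
next
  have "finite V"
    using assms unfolding finite_simple_graph_def by blast
  moreover assume "is_comparability_graph V E"
  ultimately obtain N where N: "squarefree N" "embeds_in_power_graph V E (nat_mod_group N)"
    by (rule comparability_graph_embeds_in_nat_mod_group)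
  then have "N > 0"
    by (auto intro: Nat.gr0I)
  then show "\<exists>G :: nat monoid. group G \<and> finite (carrier G) \<and> cyclic_group G \<and>
              squarefree (order G) \<and> embeds_in_power_graph V E G"
    using group_nat_mod_group cyclic_nat_mod_group order_nat_mod_group N
    by (intro exI[of _ "nat_mod_group N"]) simp
qed

end
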